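(* Let $X$ be a separable absolutely neighbourhood star-Hurewicz space. If $Y$ is a closed and discrete subset of $X$, then $|Y|<\mathfrak{b}$.
   Context: All spaces are regular. $St(A,\mathcal{U})=\bigcup\{U\in\mathcal{U}:U\cap A\neq\emptyset\}$. $\mathfrak{b}$ is the bounding number. $X$ is absolutely neighbourhood star-Hurewicz if for each sequence $(\mathcal{U}_n:n\in\omega)$ of open covers of $X$ and each dense subset $D$ of $X$ there is a sequence $(F_n:n\in\omega)$ of finite subsets of $D$ such that for any open sets $O_n$ with $F_n\subseteq O_n$ ($n\in\omega$), every $x\in X$ lies in $St(O_n,\mathcal{U}_n)$ for all but finitely many $n$. *)

theory Defs
  imports "HOL-Analysis.Analysis"
begin

definition star_of :: "'a set \<Rightarrow> 'a set set \<Rightarrow> 'a set" where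
  "star_of A \<U> = \<Union>{U \<in> \<U>. U \<inter> A \<noteq> {}}"

definition open_cover :: "'a topology \<Rightarrow> 'a set set \<Rightarrow> bool" where
  "open_cover X \<U> \<longleftrightarrow> (\<forall>U\<in>\<U>. openin X U) \<and> \<Union>\<U> = topspace X"

definition abs_nbhd_star_hurewicz :: "'a topology \<Rightarrow> bool" where
  "abs_nbhd_star_hurewicz X \<longleftrightarrow>
    (\<forall>\<U> :: nat \<Rightarrow> 'a set set. \<forall>D.
       (\<forall>n. open_cover X (\<U> n)) \<and> D \<subseteq> topspace X \<and> X closure_of D = topspace X \<longrightarrow>
       (\<exists>F :: nat \<Rightarrow> 'a set. (\<forall>n. finite (F n) \<and> F n \<subseteq> D) \<and>
          (\<forall>W :: nat \<Rightarrow> 'a set. (\<forall>n. openin X (W n) \<and> F n \<subseteq> W n) \<longrightarrow>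
             (\<forall>x\<in>topspace X. \<forall>\<^sub>F n in sequentially. x \<in> star_of (W n) (\<U> n)))))"

definition le_star :: "(nat \<Rightarrow> nat) \<Rightarrow> (nat \<Rightarrow> nat) \<Rightarrow> bool" where
  "le_star f g \<longleftrightarrow> (\<forall>\<^sub>F n in sequentially. f n \<le> g n)"

definition unbounded_family :: "(nat \<Rightarrow> nat) set \<Rightarrow> bool" where
  "unbounded_family F \<longleftrightarrow> \<not> (\<exists>g. \<forall>f\<in>F. le_star f g)"

text \<open>The bounding number b is the least cardinality of an unbounded family;
  so card A < b iff A is strictly smaller than every unbounded family.\<close>
definition card_less_bounding :: "'a set \<Rightarrow> bool" where
  "card_less_bounding A \<longleftrightarrow>
     (\<forall>F :: (nat \<Rightarrow> nat) set. unbounded_family F \<longrightarrow> ordLess2 (card_of A) (card_of F))"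

end

theory Submission
  imports Defs
begin

text \<open>Suppose an unbounded family \<open>F\<close> of functions injects into \<open>Y\<close> via \<open>p\<close>. Enumerate a
  countable dense set as \<open>e\<close> and use regularity to give every point \<open>x\<close> a neighbourhood
  \<open>V x\<close> whose closure misses \<open>Y - {x}\<close>. The \<open>n\<close>-th cover consists of \<open>X - p`F\<close> and, for
  each \<open>f \<in> F\<close>, a neighbourhood of \<open>p f\<close> missing the rest of \<open>Y\<close> and the closures of
  \<open>V (e i)\<close>, \<open>i \<le> f n\<close>. The star-Hurewicz property yields finite sets \<open>G n\<close> of dense
  points whose neighbourhoods eventually star-cover each \<open>p f\<close>; this forces \<open>G n\<close> to
  contain a point of index above \<open>f n\<close> (or \<open>p f\<close> itself), so the largest such index
  eventually dominates every \<open>f \<in> F\<close>, contradicting unboundedness.\<close>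

lemma closedin_subset_of_closed_discrete:
  assumes "closedin X Y" and "subtopology X Y = discrete_topology Y" and "S \<subseteq> Y"
  shows "closedin X S"
proof -
  have "closedin (subtopology X Y) S"
    using assms(2,3) by simp
  then show ?thesis
    using assms(1) closedin_trans_full by blast
qed

lemma regular_space_separating_nbhd:
  assumes "regular_space X" and "\<And>S. S \<subseteq> Y \<Longrightarrow> closedin X S" and "x \<in> topspace X"
  shows "\<exists>V. openin X V \<and> x \<in> V \<and> disjnt (Y - {x}) (X closure_of V)"
proof -
  have "closedin X (Y - {x})"
    using assms(2) by blast
  then show ?thesis
    using assms(1,3) unfolding regular_space by blast
qed

lemma separable_space_dense_sequence:
  assumes "separable_space X" and "topspace X \<noteq> {}"
  obtains e :: "nat \<Rightarrow> 'a"
  where "range e \<subseteq> topspace X" and "X closure_of range e = topspace X"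
proof -
  obtain D where "countable D" "D \<subseteq> topspace X" "X closure_of D = topspace X"
    using assms(1) unfolding separable_space_def by blast
  moreover have "D \<noteq> {}"
    using \<open>X closure_of D = topspace X\<close> assms(2) by (metis closure_of_empty)
  ultimately show ?thesis
    using that[of "from_nat_into D"] by (simp add: range_from_nat_into)
qed

definition isolating_nbhd ::
    "'a topology \<Rightarrow> 'a set \<Rightarrow> ('a \<Rightarrow> 'a set) \<Rightarrow> (nat \<Rightarrow> 'a) \<Rightarrow> 'a \<Rightarrow> nat \<Rightarrow> 'a set" where
  "isolating_nbhd X Y V e y k =
     topspace X - (Y - {y}) - (\<Union>i \<in> {i. i \<le> k \<and> e i \<noteq> y}. X closure_of V (e i))"

lemma openin_isolating_nbhd:
  assumes "\<And>S. S \<subseteq> Y \<Longrightarrow> closedin X S"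
  shows "openin X (isolating_nbhd X Y V e y k)"
proof -
  have "finite {i. i \<le> k \<and> e i \<noteq> y}"
    by (rule finite_subset[of _ "{..k}"]) auto
  then have "closedin X (\<Union>i \<in> {i. i \<le> k \<and> e i \<noteq> y}. X closure_of V (e i))"
    by (intro closedin_Union finite_imageI) auto
  moreover have "openin X (topspace X - (Y - {y}))"
    using assms[of "Y - {y}"] by (intro openin_diff) auto
  ultimately show ?thesis
    unfolding isolating_nbhd_def by (rule openin_diff[rotated])
qed

lemma isolating_nbhd_memI:
  assumes "y \<in> Y" and "Y \<subseteq> topspace X" and "range e \<subseteq> topspace X"
    and "\<And>x. x \<in> topspace X \<Longrightarrow> disjnt (Y - {x}) (X closure_of V x)"
  shows "y \<in> isolating_nbhd X Y V e y k"
  using assms unfolding isolating_nbhd_def disjnt_def by blast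

lemma isolating_nbhd_Int_subset: "isolating_nbhd X Y V e y k \<inter> Y \<subseteq> {y}"
  unfolding isolating_nbhd_def by auto

lemma disjnt_isolating_nbhd:
  assumes "i \<le> k" and "e i \<noteq> y"
  shows "disjnt (isolating_nbhd X Y V e y k) (V (e i))"
  using assms closure_of_subset_Int[of X "V (e i)"]
  unfolding isolating_nbhd_def disjnt_def by blast

lemma open_cover_isolating_nbhds:
  assumes "\<And>S. S \<subseteq> Y \<Longrightarrow> closedin X S" and "range e \<subseteq> topspace X"
    and "\<And>x. x \<in> topspace X \<Longrightarrow> disjnt (Y - {x}) (X closure_of V x)"
    and "p ` F \<subseteq> Y"
  shows "open_cover X (insert (topspace X - p ` F) ((\<lambda>f. isolating_nbhd X Y V e (p f) (f n)) ` F))"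
proof -
  have Y: "Y \<subseteq> topspace X"
    using assms(1) closedin_subset by blast
  have "openin X (topspace X - p ` F)"
    using assms(1,4) by (intro openin_diff) auto
  moreover have "p f \<in> isolating_nbhd X Y V e (p f) (f n)" if "f \<in> F" for f
    using that assms(2-4) Y by (intro isolating_nbhd_memI) auto
  moreover have "isolating_nbhd X Y V e y k \<subseteq> topspace X" for y k
    unfolding isolating_nbhd_def by auto
  ultimately show ?thesis
    unfolding open_cover_def using openin_isolating_nbhd[OF assms(1)] by fastforce
qed

text \<open>Injectivity of \<open>p\<close> forces the member of the cover containing \<open>p f\<close> to be the
  isolating neighbourhood of \<open>p f\<close> itself, which misses \<open>V (e i)\<close> for \<open>i \<le> f n\<close>.\<close>
lemma star_of_isolating_nbhds_reaches:
  assumes "inj_on p F" and "f \<in> F" and "p ` F \<subseteq> Y" and "G \<subseteq> range e"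
    and "p f \<in> star_of (\<Union>(V ` G))
                 (insert (topspace X - p ` F) ((\<lambda>f. isolating_nbhd X Y V e (p f) (f n)) ` F))"
  shows "\<exists>d\<in>G. f n < inv e d \<or> d = p f"
proof -
  obtain f' z d where f': "f' \<in> F" "p f \<in> isolating_nbhd X Y V e (p f') (f' n)"
    and z: "z \<in> isolating_nbhd X Y V e (p f') (f' n)" "d \<in> G" "z \<in> V d"
    using assms(2,5) unfolding star_of_def by auto
  have "p f = p f'"
    using f' assms(2,3) isolating_nbhd_Int_subset by fastforce
  then have "f' = f"
    using assms(1,2) f'(1) by (auto dest: inj_onD)
  moreover have "e (inv e d) = d"
    using z(2) assms(4) by (auto intro: f_inv_into_f)
  ultimately show ?thesis
    using z disjnt_isolating_nbhd[of "inv e d" "f n" e "p f" X Y V]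
    by (metis disjnt_iff not_le)
qed

lemma exists_le_star_bound:
  fixes e :: "nat \<Rightarrow> 'a"
  assumes G: "\<And>n. finite (G n)" "\<And>n. G n \<subseteq> range e" and p: "inj_on p F"
    and witness: "\<And>f. f \<in> F \<Longrightarrow> \<forall>\<^sub>F n in sequentially. \<exists>d\<in>G n. f n < inv e d \<or> d = p f"
  shows "\<exists>g. \<forall>f\<in>F. le_star f g"
proof -
  define B where "B n = inv e ` G n \<union> (\<lambda>f. f n) ` (F \<inter> p -` e ` {..n})" for n
  have fin: "finite (B n)" for n
  proof -
    have "finite (p -` e ` {..n} \<inter> F)"
      using p by (intro finite_vimage_IntI) auto
    then show ?thesis
      unfolding B_def using G(1) by (simp add: Int_commute)
  qed
  have B_le_Max: "k \<le> Max (B n)" if "k \<in> B n" for k n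
    by (rule Max_ge[OF fin that])
  have "le_star f (\<lambda>n. Max (B n))" if f: "f \<in> F" for f
  proof -
    have bound: "f n \<le> Max (B n)"
      if wit: "\<exists>d\<in>G n. f n < inv e d \<or> d = p f" and le: "inv e (p f) \<le> n" for n
    proof -
      obtain d where d: "d \<in> G n" and disj: "f n < inv e d \<or> d = p f"
        using wit by blast
      from disj show ?thesis
      proof
        assume "f n < inv e d"
        moreover have "inv e d \<in> B n"
          using d unfolding B_def by blast
        ultimately show ?thesis
          using B_le_Max by (meson less_imp_le order_trans)
      next
        assume "d = p f"
        then have "e (inv e (p f)) = p f"
          using d G(2) by (metis f_inv_into_f subsetD)
        then have "f \<in> F \<inter> p -` e ` {..n}"
          using f le by (metis IntI atMost_iff image_eqI vimageI)
        then show ?thesis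
          using B_le_Max unfolding B_def by blast
      qed
    qed
    have "\<forall>\<^sub>F n in sequentially. (\<exists>d\<in>G n. f n < inv e d \<or> d = p f) \<and> inv e (p f) \<le> n"
      using witness[OF f] by (intro eventually_conj eventually_ge_at_top)
    then show ?thesis
      unfolding le_star_def by (rule eventually_mono) (use bound in blast)
  qed
  then show ?thesis
    by blast
qed

lemma abs_nbhd_star_hurewicz_dominates:
  fixes e :: "nat \<Rightarrow> 'a"
  assumes "abs_nbhd_star_hurewicz X"
    and e: "range e \<subseteq> topspace X" "X closure_of range e = topspace X"
    and closed: "\<And>S. S \<subseteq> Y \<Longrightarrow> closedin X S"
    and V: "\<And>x. x \<in> topspace X \<Longrightarrow> openin X (V x) \<and> x \<in> V x \<and> disjnt (Y - {x}) (X closure_of V x)"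
    and p: "inj_on p F" "p ` F \<subseteq> Y"
  shows "\<exists>g. \<forall>f\<in>F. le_star f g"
proof -
  define U where
    "U n = insert (topspace X - p ` F) ((\<lambda>f. isolating_nbhd X Y V e (p f) (f n)) ` F)" for n
  have "disjnt (Y - {x}) (X closure_of V x)" if "x \<in> topspace X" for x
    using V[OF that] by blast
  then have "\<forall>n. open_cover X (U n)"
    unfolding U_def using open_cover_isolating_nbhds[OF closed e(1) _ p(2)] by blast
  then obtain G where G: "\<And>n. finite (G n) \<and> G n \<subseteq> range e"
    and star: "\<And>W. \<forall>n. openin X (W n) \<and> G n \<subseteq> W n \<Longrightarrow>
                 \<forall>x\<in>topspace X. \<forall>\<^sub>F n in sequentially. x \<in> star_of (W n) (U n)"
    using assms(1)[unfolded abs_nbhd_star_hurewicz_def, rule_format, of U "range e"] e by blast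
  have V_G: "openin X (V d) \<and> d \<in> V d" if "d \<in> G n" for d n
  proof -
    have "d \<in> topspace X"
      using that G e(1) by blast
    then show ?thesis
      using V by blast
  qed
  have "\<forall>n. openin X (\<Union>(V ` G n)) \<and> G n \<subseteq> \<Union>(V ` G n)"
    using V_G by (auto intro!: openin_Union)
  then have star_G: "\<forall>x\<in>topspace X. \<forall>\<^sub>F n in sequentially. x \<in> star_of (\<Union>(V ` G n)) (U n)"
    by (rule star)
  show ?thesis
  proof (rule exists_le_star_bound[OF _ _ p(1)])
    fix f
    assume f: "f \<in> F"
    then have "p f \<in> topspace X"
      using p(2) closedin_subset[OF closed[OF order_refl]] by blast
    then have "\<forall>\<^sub>F n in sequentially. p f \<in> star_of (\<Union>(V ` G n)) (U n)"
      using star_G by blast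
    then show "\<forall>\<^sub>F n in sequentially. \<exists>d\<in>G n. f n < inv e d \<or> d = p f"
    proof (rule eventually_mono)
      fix n
      assume "p f \<in> star_of (\<Union>(V ` G n)) (U n)"
      then show "\<exists>d\<in>G n. f n < inv e d \<or> d = p f"
        unfolding U_def using G by (intro star_of_isolating_nbhds_reaches[OF p(1) f p(2)]) auto
    qed
  qed (use G in auto)
qed

lemma card_less_boundingI:
  assumes "\<And>F (p :: (nat \<Rightarrow> nat) \<Rightarrow> 'a). inj_on p F \<Longrightarrow> p ` F \<subseteq> Y \<Longrightarrow> \<exists>g. \<forall>f\<in>F. le_star f g"
  shows "card_less_bounding Y"
  unfolding card_less_bounding_def unbounded_family_def
proof (intro allI impI)
  fix F :: "(nat \<Rightarrow> nat) set"
  assume unbounded: "\<nexists>g. \<forall>f\<in>F. le_star f g"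
  show "ordLess2 (card_of Y) (card_of F)"
  proof (rule ccontr)
    assume "\<not> ordLess2 (card_of Y) (card_of F)"
    then have "ordLeq3 (card_of F) (card_of Y)"
      using ordLess_or_ordLeq[OF card_of_Well_order[of Y] card_of_Well_order[of F]] by blast
    then obtain p where "inj_on p F" "p ` F \<subseteq> Y"
      using card_of_ordLeq[of F Y] by blast
    then show False
      using assms unbounded by blast
  qed
qed

theorem mainTheorem10:
  fixes X :: "'a topology" and Y :: "'a set"
  assumes "regular_space X" and "t1_space X"
    and "separable_space X" and "abs_nbhd_star_hurewicz X"
    and "closedin X Y" and "subtopology X Y = discrete_topology Y"
  shows "card_less_bounding Y"
proof (rule card_less_boundingI)
  fix F and p :: "(nat \<Rightarrow> nat) \<Rightarrow> 'a"
  assume p: "inj_on p F" "p ` F \<subseteq> Y"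
  show "\<exists>g. \<forall>f\<in>F. le_star f g"
  proof (cases "F = {}")
    case False
    have closed: "\<And>S. S \<subseteq> Y \<Longrightarrow> closedin X S"
      using closedin_subset_of_closed_discrete assms(5,6) by blast
    obtain f0 where "f0 \<in> F"
      using False by blast
    then have "topspace X \<noteq> {}"
      using p(2) closedin_subset[OF assms(5)] by blast
    then obtain e :: "nat \<Rightarrow> 'a"
      where e: "range e \<subseteq> topspace X" "X closure_of range e = topspace X"
      by (rule separable_space_dense_sequence[OF assms(3)])
    have "\<forall>x\<in>topspace X. \<exists>V. openin X V \<and> x \<in> V \<and> disjnt (Y - {x}) (X closure_of V)"
      using regular_space_separating_nbhd[OF assms(1) closed] by blast
    then obtain V where "\<And>x. x \<in> topspace X \<Longrightarrow>
        openin X (V x) \<and> x \<in> V x \<and> disjnt (Y - {x}) (X closure_of V x)"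
      by metis
    then show ?thesis
      using abs_nbhd_star_hurewicz_dominates[OF assms(4) e closed _ p] by blast
  qed simp
qed

end
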